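(* Let $H_1,H_2$ be complex Hilbert spaces. The set of densely defined closed minimum attaining operators from $H_1$ to $H_2$ is dense, with respect to the gap topology, in the set of all densely defined closed operators from $H_1$ to $H_2$.
   Context: Hilbert spaces are complex and infinite dimensional. For a densely defined closed operator $A$ with domain $D(A)$, $m(A)=\inf\{\|Ax\|: x\in D(A),\ \|x\|=1\}$, and $A$ is minimum attaining if there exists $x_0\in D(A)$, $\|x_0\|=1$, with $\|Ax_0\|=m(A)$. The gap topology is the topology induced by the metric $\theta(A,B)=\|P_{G(A)}-P_{G(B)}\|$, where $G(A)=\{(Ax,x):x\in D(A)\}$ is the (closed) graph and $P_M$ the orthogonal projection onto $M$. *)

theory Defs
  imports "HOL-Analysis.Analysis"
begin

text \<open>The distribution has no complex Hilbert spaces, so we introduce them as a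
type class: a (real) normed vector space carrying a complex scalar multiplication
extending the real one, and a complex inner product (linear in the second argument,
conjugate symmetric) inducing the norm.\<close>

class complex_inner = real_normed_vector +
  fixes scaleC :: "complex \<Rightarrow> 'a \<Rightarrow> 'a"
    and cinner :: "'a \<Rightarrow> 'a \<Rightarrow> complex"
  assumes scaleC_add_right: "scaleC a (x + y) = scaleC a x + scaleC a y"
    and scaleC_add_left: "scaleC (a + b) x = scaleC a x + scaleC b x"
    and scaleC_scaleC: "scaleC a (scaleC b x) = scaleC (a * b) x"
    and scaleC_one: "scaleC 1 x = x"
    and scaleR_scaleC: "scaleR r x = scaleC (complex_of_real r) x"
    and cinner_add_right: "cinner x (y + z) = cinner x y + cinner x z"
    and cinner_scaleC_right: "cinner x (scaleC a y) = a * cinner x y"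
    and cinner_commute: "cinner y x = cnj (cinner x y)"
    and cinner_self_norm: "cinner x x = complex_of_real ((norm x)\<^sup>2)"

class chilbert_space = complex_inner + complete_space

definition csubspace :: "'a::complex_inner set \<Rightarrow> bool" where
  "csubspace S \<longleftrightarrow> 0 \<in> S \<and> (\<forall>x\<in>S. \<forall>y\<in>S. x + y \<in> S) \<and> (\<forall>c. \<forall>x\<in>S. scaleC c x \<in> S)"

definition cspan :: "'a::complex_inner set \<Rightarrow> 'a set" where
  "cspan S = {(\<Sum>x\<in>F. scaleC (c x) x) | F c. finite F \<and> F \<subseteq> S}"

definition infinite_dimensional :: "'a::complex_inner itself \<Rightarrow> bool" where
  "infinite_dimensional _ \<longleftrightarrow> (\<forall>S::'a set. finite S \<longrightarrow> cspan S \<noteq> UNIV)"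

text \<open>An (unbounded) operator from H1 to H2 is a pair of a domain D (a complex
subspace of H1) and a map A that is complex linear on D; values outside D are
irrelevant (everything below depends only on the graph).\<close>

definition is_operator :: "'a::complex_inner set \<Rightarrow> ('a \<Rightarrow> 'b::complex_inner) \<Rightarrow> bool" where
  "is_operator D A \<longleftrightarrow> csubspace D \<and>
     (\<forall>x\<in>D. \<forall>y\<in>D. A (x + y) = A x + A y) \<and>
     (\<forall>c. \<forall>x\<in>D. A (scaleC c x) = scaleC c (A x))"

definition graph :: "'a set \<Rightarrow> ('a \<Rightarrow> 'b) \<Rightarrow> ('b \<times> 'a) set" where
  "graph D A = {(A x, x) | x. x \<in> D}"

definition densely_defined_closed :: "'a::complex_inner set \<Rightarrow> ('a \<Rightarrow> 'b::complex_inner) \<Rightarrow> bool" where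
  "densely_defined_closed D A \<longleftrightarrow> is_operator D A \<and> closure D = UNIV \<and> closed (graph D A)"

definition min_modulus :: "'a::complex_inner set \<Rightarrow> ('a \<Rightarrow> 'b::complex_inner) \<Rightarrow> real" where
  "min_modulus D A = Inf {norm (A x) | x. x \<in> D \<and> norm x = 1}"

definition minimum_attaining :: "'a::complex_inner set \<Rightarrow> ('a \<Rightarrow> 'b::complex_inner) \<Rightarrow> bool" where
  "minimum_attaining D A \<longleftrightarrow> (\<exists>x0\<in>D. norm x0 = 1 \<and> norm (A x0) = min_modulus D A)"

text \<open>Inner product of the direct sum H2 (+) H1 (its norm is the product norm of the
library, sqrt (norm u ^ 2 + norm v ^ 2)).\<close>
definition pinner :: "('b::complex_inner \<times> 'a::complex_inner) \<Rightarrow> ('b \<times> 'a) \<Rightarrow> complex" where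
  "pinner p q = cinner (fst p) (fst q) + cinner (snd p) (snd q)"

definition orth_proj :: "('b::complex_inner \<times> 'a::complex_inner) set \<Rightarrow> ('b \<times> 'a) \<Rightarrow> ('b \<times> 'a)" where
  "orth_proj M z = (THE y. y \<in> M \<and> (\<forall>m\<in>M. pinner (z - y) m = 0))"

definition gap :: "'a::complex_inner set \<Rightarrow> ('a \<Rightarrow> 'b::complex_inner) \<Rightarrow> 'a set \<Rightarrow> ('a \<Rightarrow> 'b) \<Rightarrow> real" where
  "gap D A D' A' = onorm (\<lambda>z. orth_proj (graph D A) z - orth_proj (graph D' A') z)"

end

theory Submission
  imports Defs
begin

text \<open>
  If m(A) = 0, pick a unit vector x0 in D(A) with \<parallel>A x0\<parallel> < \<epsilon> and subtract the rank one operator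
  \<langle>x0, -\<rangle> A x0: the result vanishes at x0, so it attains its minimum modulus 0, and it differs
  from A by an operator of norm less than \<epsilon>.

  If m = m(A) > 0, pick a unit vector x0 with \<parallel>A x0\<parallel>^2 < m^2 + \<delta>^2 and replace the component of A x
  along u = A x0 by m \<langle>x0, x\<rangle> u / \<parallel>u\<parallel>. Minimality of m along the complex lines x0 + t y with
  y \<bottom> x0 gives |\<langle>u, A y\<rangle>|^2 \<le> (\<parallel>u\<parallel>^2 - m^2) (\<parallel>A y\<parallel>^2 - m^2 \<parallel>y\<parallel>^2). Hence the new operator is
  still bounded below by m, sends x0 to a vector of norm m, and differs from A by O(\<delta>) relative
  to either graph norm.

  A perturbation that is small relative to both graph norms is small in the gap metric: each
  graph lies close to the other, and for closed subspaces M, N this bounds \<parallel>P_M - P_N\<parallel>.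
\<close>

section \<open>Complex inner product spaces\<close>

lemma cinner_add_left: "cinner (x + y) (z::'a::complex_inner) = cinner x z + cinner y z"
  by (metis cinner_commute cinner_add_right complex_cnj_add)

lemma cinner_scaleC_left: "cinner (scaleC a x) (y::'a::complex_inner) = cnj a * cinner x y"
  by (metis cinner_commute cinner_scaleC_right complex_cnj_mult)

lemma scaleC_zero_left [simp]: "scaleC 0 (x::'a::complex_inner) = 0"
  by (metis scaleR_scaleC scaleR_zero_left of_real_0)

lemma scaleC_minus1_left: "scaleC (-1) (x::'a::complex_inner) = - x"
  by (metis scaleR_scaleC scaleR_minus1_left of_real_1 of_real_minus)

lemma scaleC_minus_left: "scaleC (-a) (x::'a::complex_inner) = - scaleC a x"
  by (metis scaleC_scaleC scaleC_minus1_left mult_minus1)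

lemma scaleC_diff_left: "scaleC (a - b) (x::'a::complex_inner) = scaleC a x - scaleC b x"
  by (metis scaleC_add_left scaleC_minus_left diff_conv_add_uminus)

lemma cinner_zero_right [simp]: "cinner x (0::'a::complex_inner) = 0"
  by (metis cinner_add_right add_cancel_right_right add_0)

lemma cinner_minus_right: "cinner x (- y::'a::complex_inner) = - cinner x y"
  by (metis cinner_add_right add.right_inverse cinner_zero_right add_eq_0_iff)

lemma cinner_diff_right: "cinner x (y - z::'a::complex_inner) = cinner x y - cinner x z"
  by (metis cinner_add_right cinner_minus_right diff_conv_add_uminus)

lemma cinner_minus_left: "cinner (- x) (y::'a::complex_inner) = - cinner x y"
  by (metis cinner_commute cinner_minus_right complex_cnj_minus)

lemma cinner_diff_left: "cinner (x - y) (z::'a::complex_inner) = cinner x z - cinner y z"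
  by (metis cinner_add_left cinner_minus_left diff_conv_add_uminus)

lemma cinner_self_Re: "Re (cinner x (x::'a::complex_inner)) = (norm x)\<^sup>2"
  by (simp add: cinner_self_norm)

lemma cinner_eq_zero_commute: "cinner x (y::'a::complex_inner) = 0 \<longleftrightarrow> cinner y x = 0"
  by (metis cinner_commute complex_cnj_zero_iff)

lemma norm_add_sq:
  "(norm (x + y::'a::complex_inner))\<^sup>2 = (norm x)\<^sup>2 + (norm y)\<^sup>2 + 2 * Re (cinner x y)"
proof -
  have "cinner (x + y) (x + y) = cinner x x + cinner x y + cnj (cinner x y) + cinner y y"
    by (simp add: cinner_add_left cinner_add_right cinner_commute[of x y])
  then show ?thesis
    by (simp add: cinner_self_Re[symmetric])
qed

lemma norm_diff_sq:
  "(norm (x - y::'a::complex_inner))\<^sup>2 = (norm x)\<^sup>2 + (norm y)\<^sup>2 - 2 * Re (cinner x y)"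
  using norm_add_sq[of x "- y"] by (simp add: cinner_minus_right)

lemma norm_add_sq_orthogonal:
  "cinner x (y::'a::complex_inner) = 0 \<Longrightarrow> (norm (x + y))\<^sup>2 = (norm x)\<^sup>2 + (norm y)\<^sup>2"
  by (simp add: norm_add_sq)

lemma norm_scaleC: "norm (scaleC a (x::'a::complex_inner)) = cmod a * norm x"
proof -
  have "complex_of_real ((norm (scaleC a x))\<^sup>2) = cinner (scaleC a x) (scaleC a x)"
    by (simp only: cinner_self_norm)
  also have "\<dots> = (cnj a * a) * cinner x x"
    by (simp add: cinner_scaleC_left cinner_scaleC_right)
  also have "\<dots> = complex_of_real ((cmod a * norm x)\<^sup>2)"
    by (simp add: cinner_self_norm power_mult_distrib complex_mult_cnj mult.commute[of "cnj a"]
        cmod_power2)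
  finally show ?thesis
    by (simp only: of_real_eq_iff) simp
qed

lemma norm_add_scaleC_sq:
  "(norm (w + scaleC t (v::'a::complex_inner)))\<^sup>2
     = (norm w)\<^sup>2 + 2 * Re (t * cinner w v) + (cmod t)\<^sup>2 * (norm v)\<^sup>2"
  by (simp add: norm_add_sq norm_scaleC cinner_scaleC_right power_mult_distrib)

lemma cmod_cinner_le: "cmod (cinner x (y::'a::complex_inner)) \<le> norm x * norm y"
proof (cases "y = 0")
  case False
  define c where "c = cinner y x / complex_of_real ((norm y)\<^sup>2)"
  have "cinner y x - c * cinner y y = 0"
    using False by (simp add: c_def cinner_self_norm)
  moreover have "cinner (scaleC c y) (x - scaleC c y) = cnj c * (cinner y x - c * cinner y y)"
    by (simp add: cinner_scaleC_left cinner_diff_right cinner_scaleC_right algebra_simps)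
  ultimately have "cinner (scaleC c y) (x - scaleC c y) = 0"
    by simp
  then have "(norm (scaleC c y + (x - scaleC c y)))\<^sup>2
      = (norm (scaleC c y))\<^sup>2 + (norm (x - scaleC c y))\<^sup>2"
    by (rule norm_add_sq_orthogonal)
  then have "(norm x)\<^sup>2 = (norm (scaleC c y))\<^sup>2 + (norm (x - scaleC c y))\<^sup>2"
    by simp
  then have "(cmod c * norm y)\<^sup>2 \<le> (norm x)\<^sup>2"
    by (simp add: norm_scaleC)
  then have "cmod c * norm y \<le> norm x"
    by (rule power2_le_imp_le) simp
  moreover have "cmod c * norm y = cmod (cinner x y) / norm y"
    using False by (simp add: c_def norm_divide norm_mult power2_eq_square complex_mod_cnj
        cinner_commute[of y x])
  ultimately show ?thesis
    using False by (simp add: divide_le_eq)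
qed simp

lemma cmod_sq_le_of_quadratic_nonneg:
  fixes b :: complex and \<eta> C :: real
  assumes "0 \<le> \<eta>" "0 \<le> C"
    and quadratic: "\<And>t. 0 \<le> \<eta> + 2 * Re (t * b) + (cmod t)\<^sup>2 * C"
  shows "(cmod b)\<^sup>2 \<le> \<eta> * C"
proof -
  define B where "B = (cmod b)\<^sup>2"
  have B: "0 \<le> \<eta> - 2 * k * B + k\<^sup>2 * B * C" for k
  proof -
    define t where "t = - (complex_of_real k * cnj b)"
    have "cnj b * b = complex_of_real B"
      by (simp add: B_def mult.commute[of "cnj b"] complex_mult_cnj cmod_power2)
    then have "Re (t * b) = - (k * B)"
      by (simp add: t_def mult.assoc)
    moreover have "(cmod t)\<^sup>2 = k\<^sup>2 * B"
      by (simp add: t_def B_def norm_mult power_mult_distrib)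
    ultimately show ?thesis
      using quadratic[of t] by (simp add: algebra_simps)
  qed
  show ?thesis
  proof (cases "C = 0")
    case True
    have "0 \<le> \<eta> - 2 * (\<eta> + 1)" if "0 < B"
      using B[of "(\<eta> + 1) / B"] that True by simp
    then show ?thesis
      using True \<open>0 \<le> \<eta>\<close> by (fastforce simp: B_def)
  next
    case False
    then have "0 \<le> \<eta> - B / C"
      using B[of "1 / C"] \<open>0 \<le> C\<close> by (simp add: power2_eq_square)
    then show ?thesis
      using False \<open>0 \<le> C\<close> by (simp add: B_def field_simps)
  qed
qed

instantiation prod :: (complex_inner, complex_inner) complex_inner
begin

definition scaleC_prod_def: "scaleC c p = (scaleC c (fst p), scaleC c (snd p))"

definition cinner_prod_def: "cinner p q = cinner (fst p) (fst q) + cinner (snd p) (snd q)"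

instance
proof
  fix a b :: complex and x y z :: "'a \<times> 'b" and r :: real
  show "scaleC a (x + y) = scaleC a x + scaleC a y"
    by (simp add: scaleC_prod_def scaleC_add_right)
  show "scaleC (a + b) x = scaleC a x + scaleC b x"
    by (simp add: scaleC_prod_def scaleC_add_left)
  show "scaleC a (scaleC b x) = scaleC (a * b) x"
    by (simp add: scaleC_prod_def scaleC_scaleC)
  show "scaleC 1 x = x"
    by (simp add: scaleC_prod_def scaleC_one)
  show "scaleR r x = scaleC (complex_of_real r) x"
    by (simp add: scaleC_prod_def scaleR_prod_def scaleR_scaleC)
  show "cinner x (y + z) = cinner x y + cinner x z"
    by (simp add: cinner_prod_def cinner_add_right)
  show "cinner x (scaleC a y) = a * cinner x y"
    by (simp add: cinner_prod_def scaleC_prod_def cinner_scaleC_right distrib_left)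
  show "cinner y x = cnj (cinner x y)"
    by (simp add: cinner_prod_def cinner_commute[of "fst x"] cinner_commute[of "snd x"])
  show "cinner x x = complex_of_real ((norm x)\<^sup>2)"
    by (simp add: cinner_prod_def norm_prod_def cinner_self_norm)
qed

end

instance prod :: (chilbert_space, chilbert_space) chilbert_space ..

lemma pinner_eq_cinner: "pinner p q = cinner p q"
  by (simp add: pinner_def cinner_prod_def)

section \<open>Orthogonal projections\<close>

lemma csubspace_diff: "csubspace M \<Longrightarrow> x \<in> M \<Longrightarrow> y \<in> M \<Longrightarrow> x - y \<in> M"
  unfolding csubspace_def by (metis diff_conv_add_uminus scaleC_minus1_left)

lemma csubspace_scaleR: "csubspace M \<Longrightarrow> x \<in> M \<Longrightarrow> scaleR r x \<in> M"
  unfolding csubspace_def by (simp add: scaleR_scaleC)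

lemma Cauchy_if_dist_le_null_sum:
  fixes f :: "nat \<Rightarrow> 'a::metric_space"
  assumes dist: "\<And>i j. dist (f i) (f j) \<le> g i + g j" and g: "g \<longlonglongrightarrow> 0"
  shows "Cauchy f"
proof (rule metric_CauchyI)
  fix e :: real assume "0 < e"
  then have "\<exists>N. \<forall>n\<ge>N. norm (g n - 0) < e / 2"
    using g unfolding LIMSEQ_iff by (meson half_gt_zero)
  then obtain N where "\<And>n. N \<le> n \<Longrightarrow> norm (g n - 0) < e / 2"
    by blast
  then have N: "g n < e / 2" if "N \<le> n" for n
    using that by (force simp: abs_less_iff)
  then have "dist (f i) (f j) < e" if "N \<le> i" "N \<le> j" for i j
    using dist[of i j] N[OF that(1)] N[OF that(2)] by linarith
  then show "\<exists>N. \<forall>i\<ge>N. \<forall>j\<ge>N. dist (f i) (f j) < e"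
    by blast
qed

lemma norm_diff_sq_le_midpoint:
  fixes x y z :: "'a::complex_inner"
  assumes "0 \<le> d" "d \<le> norm (z - scaleR (1/2) (x + y))"
  shows "(norm (x - y))\<^sup>2 \<le> 2 * (norm (z - x))\<^sup>2 + 2 * (norm (z - y))\<^sup>2 - 4 * d\<^sup>2"
proof -
  have "(z - x) + (z - y) = scaleR 2 (z - scaleR (1/2) (x + y))"
    by (simp add: algebra_simps scaleR_2)
  then have "(2 * d)\<^sup>2 \<le> (norm ((z - x) + (z - y)))\<^sup>2"
    using assms by (simp add: power_mono)
  moreover have "(norm ((z - x) + (z - y)))\<^sup>2 + (norm (x - y))\<^sup>2
      = 2 * (norm (z - x))\<^sup>2 + 2 * (norm (z - y))\<^sup>2"
    using norm_add_sq[of "z - x" "z - y"] norm_diff_sq[of "z - x" "z - y"]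
    by (simp add: norm_minus_commute)
  ultimately show ?thesis
    by (simp add: power_mult_distrib)
qed

lemma minimizing_sequence_Cauchy:
  fixes M :: "'a::complex_inner set"
  assumes "csubspace M" "\<And>n. f n \<in> M" "0 \<le> d" "\<And>m. m \<in> M \<Longrightarrow> d \<le> norm (z - m)"
    and f: "\<And>n. (norm (z - f n))\<^sup>2 < d\<^sup>2 + 1 / Suc n"
  shows "Cauchy f"
proof -
  have "dist (f i) (f j) \<le> sqrt (2 / Suc i) + sqrt (2 / Suc j)" for i j
  proof -
    have "scaleR (1/2) (f i + f j) \<in> M"
      using assms(1,2) by (auto simp: csubspace_def intro: csubspace_scaleR)
    then have "(norm (f i - f j))\<^sup>2 \<le> 2 / Suc i + 2 / Suc j"
      using norm_diff_sq_le_midpoint[OF assms(3) assms(4)] f[of i] f[of j] by fastforce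
    then have "dist (f i) (f j) \<le> sqrt (2 / Suc i + 2 / Suc j)"
      by (simp add: dist_norm real_le_rsqrt)
    also have "\<dots> \<le> sqrt (2 / Suc i) + sqrt (2 / Suc j)"
      by (rule sqrt_add_le_add_sqrt) simp_all
    finally show ?thesis .
  qed
  moreover have "(\<lambda>n. sqrt (2 / Suc n)) \<longlonglongrightarrow> 0"
    using tendsto_real_sqrt[OF LIMSEQ_Suc[OF lim_const_over_n[of 2]]] by simp
  ultimately show ?thesis
    by (rule Cauchy_if_dist_le_null_sum)
qed

lemma closest_point_exists:
  fixes M :: "'a::chilbert_space set"
  assumes M: "csubspace M" "closed M"
  shows "\<exists>y\<in>M. \<forall>m\<in>M. norm (z - y) \<le> norm (z - m)"
proof -
  define d where "d = infdist z M"
  have "M \<noteq> {}"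
    using M by (auto simp: csubspace_def)
  have d: "0 \<le> d" "\<And>m. m \<in> M \<Longrightarrow> d \<le> norm (z - m)"
    by (auto simp: d_def infdist_nonneg dist_norm intro: infdist_le[THEN order_trans])
  have "\<exists>m\<in>M. (norm (z - m))\<^sup>2 < d\<^sup>2 + 1 / Suc n" for n
  proof -
    have "d < sqrt (d\<^sup>2 + 1 / Suc n)"
      using d(1) real_less_rsqrt by simp
    then obtain m where "m \<in> M" "dist z m < sqrt (d\<^sup>2 + 1 / Suc n)"
      using \<open>M \<noteq> {}\<close> by (auto simp: d_def infdist_notempty cINF_less_iff)
    then show ?thesis
      by (metis dist_norm norm_ge_zero real_sqrt_abs real_sqrt_less_iff abs_of_nonneg)
  qed
  then obtain f where f: "\<And>n. f n \<in> M" "\<And>n. (norm (z - f n))\<^sup>2 < d\<^sup>2 + 1 / Suc n"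
    by metis
  then have "Cauchy f"
    using minimizing_sequence_Cauchy[OF M(1) _ d] by blast
  then obtain y where y: "f \<longlonglongrightarrow> y"
    using Cauchy_convergent convergent_def by blast
  have "y \<in> M"
    using M(2) y f(1) closed_sequential_limits by blast
  have "(norm (z - y))\<^sup>2 \<le> d\<^sup>2 + 0"
  proof (rule LIMSEQ_le)
    show "(\<lambda>n. (norm (z - f n))\<^sup>2) \<longlonglongrightarrow> (norm (z - y))\<^sup>2"
      by (intro tendsto_intros y)
    show "(\<lambda>n. d\<^sup>2 + 1 / Suc n) \<longlonglongrightarrow> d\<^sup>2 + 0"
      by (intro tendsto_intros LIMSEQ_Suc[OF lim_const_over_n])
    show "\<exists>N. \<forall>n\<ge>N. (norm (z - f n))\<^sup>2 \<le> d\<^sup>2 + 1 / Suc n"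
      using f(2) less_imp_le by blast
  qed
  then have "(norm (z - y))\<^sup>2 \<le> d\<^sup>2"
    by simp
  then have "norm (z - y) \<le> d"
    using d(1) by (rule power2_le_imp_le)
  with d(2) have "\<forall>m\<in>M. norm (z - y) \<le> norm (z - m)"
    by (meson order_trans)
  with \<open>y \<in> M\<close> show ?thesis
    by blast
qed

lemma closest_point_orthogonal:
  fixes M :: "'a::complex_inner set"
  assumes M: "csubspace M" and "y \<in> M" and closest: "\<And>m. m \<in> M \<Longrightarrow> norm (z - y) \<le> norm (z - m)"
    and "m \<in> M"
  shows "cinner (z - y) m = 0"
proof -
  have "0 \<le> 0 + 2 * Re (t * cinner (z - y) m) + (cmod t)\<^sup>2 * (norm m)\<^sup>2" for t
  proof -
    have "y - scaleC t m \<in> M"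
      using M assms(2,4) by (simp add: csubspace_def csubspace_diff)
    moreover have "z - (y - scaleC t m) = (z - y) + scaleC t m"
      by (simp add: algebra_simps)
    ultimately have "norm (z - y) \<le> norm ((z - y) + scaleC t m)"
      using closest by metis
    then have "(norm (z - y))\<^sup>2 \<le> (norm ((z - y) + scaleC t m))\<^sup>2"
      by (simp add: power_mono)
    then show ?thesis
      by (simp add: norm_add_scaleC_sq)
  qed
  then have "(cmod (cinner (z - y) m))\<^sup>2 \<le> 0 * (norm m)\<^sup>2"
    by (intro cmod_sq_le_of_quadratic_nonneg) simp_all
  then show ?thesis
    by simp
qed

lemma orthogonal_projection_unique:
  fixes M :: "'a::complex_inner set"
  assumes "csubspace M"
    and "y1 \<in> M" "\<forall>m\<in>M. cinner (z - y1) m = 0"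
    and "y2 \<in> M" "\<forall>m\<in>M. cinner (z - y2) m = 0"
  shows "y1 = y2"
proof -
  have "y1 - y2 \<in> M"
    using assms csubspace_diff by blast
  then have "cinner (z - y2) (y1 - y2) - cinner (z - y1) (y1 - y2) = 0"
    using assms by simp
  then have "cinner (y1 - y2) (y1 - y2) = 0"
    by (simp add: cinner_diff_left)
  then show ?thesis
    by (simp add: cinner_self_norm)
qed

(* orth_proj, on an arbitrary complex inner product space rather than on products only *)
definition cproj :: "'a::complex_inner set \<Rightarrow> 'a \<Rightarrow> 'a" where
  "cproj M z = (THE y. y \<in> M \<and> (\<forall>m\<in>M. cinner (z - y) m = 0))"

lemma orth_proj_eq_cproj: "orth_proj M = cproj M"
  by (simp add: fun_eq_iff orth_proj_def cproj_def pinner_eq_cinner)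

lemma
  fixes M :: "'a::chilbert_space set"
  assumes "csubspace M" "closed M"
  shows cproj_in: "cproj M z \<in> M"
    and cproj_orthogonal: "m \<in> M \<Longrightarrow> cinner (z - cproj M z) m = 0"
proof -
  obtain y where "y \<in> M" "\<forall>m\<in>M. norm (z - y) \<le> norm (z - m)"
    using closest_point_exists[OF assms] by blast
  then have "\<exists>!y. y \<in> M \<and> (\<forall>m\<in>M. cinner (z - y) m = 0)"
    using closest_point_orthogonal[OF assms(1)] orthogonal_projection_unique[OF assms(1)]
    by blast
  then have "cproj M z \<in> M \<and> (\<forall>m\<in>M. cinner (z - cproj M z) m = 0)"
    unfolding cproj_def by (rule theI')
  then show "cproj M z \<in> M" "m \<in> M \<Longrightarrow> cinner (z - cproj M z) m = 0"
    by auto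
qed

lemma cproj_eqI:
  fixes M :: "'a::chilbert_space set"
  assumes "csubspace M" "closed M" "y \<in> M" "\<And>m. m \<in> M \<Longrightarrow> cinner (z - y) m = 0"
  shows "cproj M z = y"
  using orthogonal_projection_unique[OF assms(1)] cproj_in[OF assms(1,2)]
    cproj_orthogonal[OF assms(1,2)] assms(3,4) by blast

lemma norm_diff_cproj_le:
  fixes M :: "'a::chilbert_space set"
  assumes M: "csubspace M" "closed M" and "q \<in> M"
  shows "norm (p - cproj M p) \<le> norm (p - q)"
proof -
  have "cinner (p - cproj M p) (cproj M p - q) = 0"
    using M assms(3) by (simp add: cproj_orthogonal cproj_in csubspace_diff)
  then have "(norm ((p - cproj M p) + (cproj M p - q)))\<^sup>2
      = (norm (p - cproj M p))\<^sup>2 + (norm (cproj M p - q))\<^sup>2"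
    by (rule norm_add_sq_orthogonal)
  then have "(norm (p - q))\<^sup>2 = (norm (p - cproj M p))\<^sup>2 + (norm (cproj M p - q))\<^sup>2"
    by simp
  then have "(norm (p - cproj M p))\<^sup>2 \<le> (norm (p - q))\<^sup>2"
    by simp
  then show ?thesis
    by (rule power2_le_imp_le) simp
qed

section \<open>Operators and the gap between their graphs\<close>

lemma is_operator_zero: "is_operator D A \<Longrightarrow> A 0 = 0"
  unfolding is_operator_def csubspace_def by (metis add_0 add_cancel_right_right)

lemma is_operator_diff:
  assumes "is_operator D A" "x \<in> D" "y \<in> D"
  shows "A (x - y) = A x - A y"
proof -
  have "x - y \<in> D"
    using assms by (simp add: is_operator_def csubspace_diff)
  then have "A ((x - y) + y) = A (x - y) + A y"
    using assms unfolding is_operator_def by blast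
  then show ?thesis
    by (simp add: algebra_simps)
qed

lemma is_operator_add_rank_one:
  assumes "is_operator D A"
    and "\<And>x y. x \<in> D \<Longrightarrow> y \<in> D \<Longrightarrow> l (x + y) = l x + l y"
    and "\<And>c x. x \<in> D \<Longrightarrow> l (scaleC c x) = c * l x"
  shows "is_operator D (\<lambda>x. A x + scaleC (l x) v)"
  using assms by (simp add: is_operator_def scaleC_add_left scaleC_add_right scaleC_scaleC)

lemma graph_csubspace:
  assumes "is_operator D A"
  shows "csubspace (graph D A)"
proof -
  have D: "csubspace D"
    using assms by (simp add: is_operator_def)
  have "(0 :: 'b \<times> 'a) = (A 0, 0)"
    by (simp add: zero_prod_def is_operator_zero[OF assms])
  moreover have "(A x, x) + (A y, y) = (A (x + y), x + y)" if "x \<in> D" "y \<in> D" for x y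
    using assms that by (simp add: is_operator_def)
  moreover have "scaleC c (A x, x) = (A (scaleC c x), scaleC c x)" if "x \<in> D" for c x
    using assms that by (simp add: is_operator_def scaleC_prod_def)
  ultimately show ?thesis
    using D unfolding csubspace_def graph_def by (smt (verit) mem_Collect_eq)
qed

lemma norm_cproj_le_if_orthogonal:
  fixes M N :: "'a::chilbert_space set"
  assumes M: "csubspace M" "closed M" and N: "csubspace N" "closed N" and "0 \<le> r"
    and MN: "\<And>p. p \<in> M \<Longrightarrow> norm (p - cproj N p) \<le> r * norm p"
    and orth: "\<And>n. n \<in> N \<Longrightarrow> cinner w n = 0"
  shows "norm (cproj M w) \<le> r * norm w"
proof -
  define p where "p = cproj M w"
  have "p \<in> M"
    using M by (simp add: p_def cproj_in)
  have "cinner p (w - p) = 0"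
    using cproj_orthogonal[OF M \<open>p \<in> M\<close>, of w, THEN cinner_eq_zero_commute[THEN iffD1]]
    by (simp add: p_def)
  then have "cinner p p = cinner p w"
    by (simp add: cinner_diff_right)
  also have "\<dots> = cinner (p - cproj N p) w"
    using orth[OF cproj_in[OF N], of p, THEN cinner_eq_zero_commute[THEN iffD1]]
    by (simp add: cinner_diff_left)
  finally have "(norm p)\<^sup>2 = Re (cinner (p - cproj N p) w)"
    by (simp add: cinner_self_Re[symmetric])
  also have "\<dots> \<le> norm (p - cproj N p) * norm w"
    using complex_Re_le_cmod[of "cinner (p - cproj N p) w"] cmod_cinner_le[of "p - cproj N p" w]
    by linarith
  also have "\<dots> \<le> norm p * (r * norm w)"
    using mult_right_mono[OF MN[OF \<open>p \<in> M\<close>] norm_ge_zero[of w]] by (simp add: ac_simps)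
  finally have "norm p * norm p \<le> norm p * (r * norm w)"
    by (simp add: power2_eq_square)
  then show ?thesis
    using \<open>0 \<le> r\<close> by (cases "norm p = 0") (auto simp: p_def)
qed

(* With w = x - P_N x one has P_M x - P_N x = P_M w - (P_N x - P_M P_N x), an orthogonal sum of
   a vector of norm at most r |w| and one of norm at most r |P_N x|. *)
lemma norm_cproj_diff_le:
  fixes M N :: "'a::chilbert_space set"
  assumes M: "csubspace M" "closed M" and N: "csubspace N" "closed N" and "0 \<le> r"
    and MN: "\<And>p. p \<in> M \<Longrightarrow> norm (p - cproj N p) \<le> r * norm p"
    and NM: "\<And>q. q \<in> N \<Longrightarrow> norm (q - cproj M q) \<le> r * norm q"
  shows "norm (cproj M x - cproj N x) \<le> r * norm x"
proof -
  define b where "b = cproj N x"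
  define w where "w = x - b"
  have "b \<in> N" and w_orth: "\<And>n. n \<in> N \<Longrightarrow> cinner w n = 0"
    using N by (simp_all add: b_def w_def cproj_in cproj_orthogonal)
  have "cproj M x = cproj M w + cproj M b"
  proof (rule cproj_eqI[OF M])
    show "cproj M w + cproj M b \<in> M"
      using M by (simp add: cproj_in csubspace_def)
    show "cinner (x - (cproj M w + cproj M b)) m = 0" if "m \<in> M" for m
      using cproj_orthogonal[OF M that, of w] cproj_orthogonal[OF M that, of b]
      by (simp add: w_def cinner_diff_left cinner_add_left algebra_simps)
  qed
  then have decomp: "cproj M x - b = cproj M w + - (b - cproj M b)"
    by simp
  have "cinner (cproj M w) (- (b - cproj M b)) = 0"
    using cproj_orthogonal[OF M cproj_in[OF M, of w], of b, THEN cinner_eq_zero_commute[THEN iffD1]]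
    by (simp add: cinner_minus_right cinner_diff_right)
  then have "(norm (cproj M x - b))\<^sup>2 = (norm (cproj M w))\<^sup>2 + (norm (b - cproj M b))\<^sup>2"
    by (simp only: decomp norm_add_sq_orthogonal norm_minus_cancel)
  also have "\<dots> \<le> (r * norm w)\<^sup>2 + (r * norm b)\<^sup>2"
    using norm_cproj_le_if_orthogonal[OF M N \<open>0 \<le> r\<close> MN w_orth] NM[OF \<open>b \<in> N\<close>]
    by (intro add_mono power_mono) simp_all
  also have "\<dots> = (r * norm x)\<^sup>2"
    using norm_add_sq_orthogonal[OF w_orth[OF \<open>b \<in> N\<close>]]
    by (simp add: w_def power_mult_distrib distrib_left[symmetric])
  finally show ?thesis
    unfolding b_def[symmetric] by (rule power2_le_imp_le) (simp add: \<open>0 \<le> r\<close>)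
qed

lemma norm_diff_cproj_graph_le:
  fixes A B :: "'a::chilbert_space \<Rightarrow> 'b::chilbert_space"
  assumes "is_operator D B" "closed (graph D B)" "z \<in> D"
  shows "norm ((A z, z) - cproj (graph D B) (A z, z)) \<le> norm (B z - A z)"
proof -
  have "(B z, z) \<in> graph D B"
    using assms(3) by (auto simp: graph_def)
  then have "norm ((A z, z) - cproj (graph D B) (A z, z)) \<le> norm ((A z, z) - (B z, z))"
    using norm_diff_cproj_le[OF graph_csubspace[OF assms(1)] assms(2)] by blast
  then show ?thesis
    by (simp add: norm_Pair norm_minus_commute)
qed

lemma gap_le:
  fixes A A' :: "'a::chilbert_space \<Rightarrow> 'b::chilbert_space"
  assumes "is_operator D A" "is_operator D A'" "closed (graph D A)" "closed (graph D A')"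
    and "0 \<le> r"
    and bound: "\<And>z. z \<in> D \<Longrightarrow> norm (A' z - A z) \<le> r * norm (A z, z)"
    and bound': "\<And>z. z \<in> D \<Longrightarrow> norm (A' z - A z) \<le> r * norm (A' z, z)"
  shows "gap D A D A' \<le> r"
proof -
  have "norm (cproj (graph D A) x - cproj (graph D A') x) \<le> r * norm x" for x
  proof (rule norm_cproj_diff_le)
    fix p assume "p \<in> graph D A"
    then obtain z where "z \<in> D" "p = (A z, z)"
      by (auto simp: graph_def)
    then show "norm (p - cproj (graph D A') p) \<le> r * norm p"
      using order_trans[OF norm_diff_cproj_graph_le[OF assms(2,4) \<open>z \<in> D\<close>, of A]
        bound[OF \<open>z \<in> D\<close>]] by simp
  next
    fix q assume "q \<in> graph D A'"
    then obtain z where "z \<in> D" "q = (A' z, z)"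
      by (auto simp: graph_def)
    moreover have "norm (A z - A' z) \<le> r * norm (A' z, z)"
      using bound'[OF \<open>z \<in> D\<close>] by (simp add: norm_minus_commute)
    ultimately show "norm (q - cproj (graph D A) q) \<le> r * norm q"
      using order_trans[OF norm_diff_cproj_graph_le[OF assms(1,3) \<open>z \<in> D\<close>, of A']] by simp
  qed (simp_all add: assms graph_csubspace)
  then show ?thesis
    unfolding gap_def orth_proj_eq_cproj using \<open>0 \<le> r\<close> by (intro onorm_bound) auto
qed

lemma closed_image_bi_lipschitz:
  fixes f :: "'a::complete_space \<Rightarrow> 'b::complete_space"
  assumes "closed S" and "C-lipschitz_on S f" and "K-lipschitz_on (f ` S) g"
    and inverse: "\<And>x. x \<in> S \<Longrightarrow> g (f x) = x"
  shows "closed (f ` S)"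
proof -
  have "complete S"
    using \<open>closed S\<close> complete_eq_closed by blast
  have "complete (f ` S)"
  proof (rule completeI)
    fix \<sigma> assume \<sigma>: "\<forall>n. \<sigma> n \<in> f ` S" "Cauchy \<sigma>"
    then have "\<forall>n. \<exists>x. x \<in> S \<and> \<sigma> n = f x"
      by blast
    from choice[OF this] obtain s where s: "\<forall>n. s n \<in> S \<and> \<sigma> n = f (s n)"
      by blast
    then have \<sigma>_eq: "\<sigma> = f \<circ> s" and "g \<circ> \<sigma> = s"
      using inverse by (simp_all add: fun_eq_iff)
    then have "Cauchy s"
      using uniformly_continuous_imp_Cauchy_continuous
          [OF lipschitz_on_uniformly_continuous[OF assms(3)]] \<sigma>
      by (auto simp: Cauchy_continuous_on_def)
    then obtain l where "l \<in> S" "s \<longlonglongrightarrow> l"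
      using completeE[OF \<open>complete S\<close>] s by metis
    then have "\<sigma> \<longlonglongrightarrow> f l"
      using lipschitz_on_continuous_on[OF assms(2)] s \<open>l \<in> S\<close>
      unfolding \<sigma>_eq continuous_on_sequentially by blast
    then show "\<exists>l\<in>f ` S. \<sigma> \<longlonglongrightarrow> l"
      using \<open>l \<in> S\<close> by auto
  qed
  then show ?thesis
    by (simp add: complete_eq_closed)
qed

lemma dist_graph_points:
  assumes "is_operator D A" "x \<in> D" "y \<in> D"
  shows "dist (A x, x) (A y, y) = norm (A (x - y), x - y)"
  using assms by (simp add: dist_norm is_operator_diff)

lemma closed_graph_if_graph_norms_equivalent:
  fixes A A' :: "'a::chilbert_space \<Rightarrow> 'b::chilbert_space"
  assumes op: "is_operator D A" and op': "is_operator D A'" and "closed (graph D A)" "0 \<le> c"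
    and le: "\<And>z. z \<in> D \<Longrightarrow> norm (A' z, z) \<le> c * norm (A z, z)"
    and le': "\<And>z. z \<in> D \<Longrightarrow> norm (A z, z) \<le> c * norm (A' z, z)"
  shows "closed (graph D A')"
proof -
  define f where "f p = (A' (snd p), snd p)" for p :: "'b \<times> 'a"
  define g where "g p = (A (snd p), snd p)" for p :: "'b \<times> 'a"
  have D: "csubspace D"
    using op by (simp add: is_operator_def)
  have image: "f ` graph D A = graph D A'"
    by (force simp: f_def graph_def)
  have "closed (f ` graph D A)"
  proof (rule closed_image_bi_lipschitz)
    show "c-lipschitz_on (graph D A) f"
    proof (rule lipschitz_onI[OF _ \<open>0 \<le> c\<close>])
      fix p q assume "p \<in> graph D A" "q \<in> graph D A"
      then obtain x y where "x \<in> D" "y \<in> D" "p = (A x, x)" "q = (A y, y)"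
        by (auto simp: graph_def)
      then show "dist (f p) (f q) \<le> c * dist p q"
        using le[OF csubspace_diff[OF D \<open>x \<in> D\<close> \<open>y \<in> D\<close>]]
        by (simp add: f_def dist_graph_points[OF op] dist_graph_points[OF op'])
    qed
    show "c-lipschitz_on (f ` graph D A) g"
      unfolding image
    proof (rule lipschitz_onI[OF _ \<open>0 \<le> c\<close>])
      fix p q assume "p \<in> graph D A'" "q \<in> graph D A'"
      then obtain x y where "x \<in> D" "y \<in> D" "p = (A' x, x)" "q = (A' y, y)"
        by (auto simp: graph_def)
      then show "dist (g p) (g q) \<le> c * dist p q"
        using le'[OF csubspace_diff[OF D \<open>x \<in> D\<close> \<open>y \<in> D\<close>]]
        by (simp add: g_def dist_graph_points[OF op] dist_graph_points[OF op'])
    qed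
    show "g (f p) = p" if "p \<in> graph D A" for p
      using that by (auto simp: f_def g_def graph_def)
  qed fact
  then show ?thesis
    by (simp add: image)
qed

lemma norm_graph_le_if_relative_bound:
  assumes "norm (A' z - A z) \<le> r * norm (A z, z)"
  shows "norm (A' z, z) \<le> (2 + r) * norm (A z, z)"
proof -
  have "norm (A' z, z) \<le> norm (A z) + norm (A' z - A z) + norm z"
    using norm_Pair_le[of "A' z" z] norm_triangle_sub[of "A' z" "A z"] by linarith
  also have "\<dots> \<le> (2 + r) * norm (A z, z)"
    using assms norm_fst_le[of "A z" z] norm_snd_le[of z "A z"] by (simp add: algebra_simps)
  finally show ?thesis .
qed

lemma norm_Pair_combination_le:
  assumes "0 \<le> c" "0 \<le> d"
  shows "c * norm z + d * norm v \<le> (c + d) * norm (v, z)"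
  using mult_left_mono[OF norm_snd_le[of z v] assms(1)]
    mult_left_mono[OF norm_fst_le[of v z] assms(2)]
  by (simp add: distrib_right)

lemma relatively_bounded_perturbation:
  fixes A A' :: "'a::chilbert_space \<Rightarrow> 'b::chilbert_space"
  assumes "densely_defined_closed D A" "is_operator D A'" "0 \<le> r"
    and bound: "\<And>z. z \<in> D \<Longrightarrow> norm (A' z - A z) \<le> r * norm (A z, z)"
    and bound': "\<And>z. z \<in> D \<Longrightarrow> norm (A' z - A z) \<le> r * norm (A' z, z)"
  shows "densely_defined_closed D A' \<and> gap D A D A' \<le> r"
proof -
  have op: "is_operator D A" and "closure D = UNIV" and closed: "closed (graph D A)"
    using assms(1) by (simp_all add: densely_defined_closed_def)
  have "closed (graph D A')"
  proof (rule closed_graph_if_graph_norms_equivalent[OF op assms(2) closed])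
    show "0 \<le> 2 + r"
      using \<open>0 \<le> r\<close> by simp
    show "norm (A' z, z) \<le> (2 + r) * norm (A z, z)" if "z \<in> D" for z
      using bound[OF that] by (rule norm_graph_le_if_relative_bound)
    show "norm (A z, z) \<le> (2 + r) * norm (A' z, z)" if "z \<in> D" for z
      using bound'[OF that]
      by (intro norm_graph_le_if_relative_bound) (simp add: norm_minus_commute)
  qed
  then show ?thesis
    using gap_le[OF op assms(2) closed _ \<open>0 \<le> r\<close> bound bound'] assms(2) \<open>closure D = UNIV\<close>
    by (simp add: densely_defined_closed_def)
qed

section \<open>Minimum modulus, and the case of modulus zero\<close>

lemma normalized_in_csubspace:
  assumes "csubspace D" "x \<in> D" "x \<noteq> 0"
  shows "scaleC (complex_of_real (1 / norm x)) x \<in> D"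
    and "norm (scaleC (complex_of_real (1 / norm x)) x) = 1"
  using assms by (simp_all add: csubspace_def norm_scaleC norm_divide)

lemma exists_unit_vector_if_dense:
  fixes D :: "'a::complex_inner set"
  assumes "infinite_dimensional TYPE('a)" "csubspace D" "closure D = UNIV"
  shows "\<exists>x\<in>D. norm x = 1"
proof -
  have "cspan ({} :: 'a set) = {0}"
    by (simp add: cspan_def)
  moreover have "cspan ({} :: 'a set) \<noteq> UNIV"
    using assms(1) by (simp add: infinite_dimensional_def)
  ultimately obtain v :: 'a where "v \<noteq> 0"
    by auto
  then have "\<not> D \<subseteq> {0}"
    using assms(3) closure_minimal[of D "{0}"] by auto
  then obtain x where "x \<in> D" "x \<noteq> 0"
    by auto
  then show ?thesis
    using normalized_in_csubspace[OF assms(2)] by blast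
qed

lemma min_modulus_nonneg: "\<exists>x\<in>D. norm x = 1 \<Longrightarrow> 0 \<le> min_modulus D A"
  unfolding min_modulus_def by (rule cInf_greatest) auto

lemma min_modulus_le:
  assumes "is_operator D A" "x \<in> D"
  shows "min_modulus D A * norm x \<le> norm (A x)"
proof (cases "x = 0")
  case False
  define y where "y = scaleC (complex_of_real (1 / norm x)) x"
  have "y \<in> D" "norm y = 1"
    using normalized_in_csubspace[OF _ assms(2) False] assms(1)
    by (simp_all add: y_def is_operator_def)
  then have "min_modulus D A \<le> norm (A y)"
    unfolding min_modulus_def by (intro cInf_lower) (auto intro: bdd_belowI[of _ 0])
  also have "norm (A y) = norm (A x) / norm x"
    using assms by (simp add: y_def is_operator_def norm_scaleC norm_divide)
  finally show ?thesis
    using False by (simp add: le_divide_eq)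
qed (use assms is_operator_zero in simp)

lemma min_modulus_lessD:
  assumes "\<exists>x\<in>D. norm x = 1" "min_modulus D A < t"
  shows "\<exists>x\<in>D. norm x = 1 \<and> norm (A x) < t"
  using assms cInf_lessD[of "{norm (A x) |x. x \<in> D \<and> norm x = 1}" t]
  unfolding min_modulus_def by blast

lemma minimum_attainingI:
  assumes "x0 \<in> D" "norm x0 = 1" "norm (A x0) = \<mu>"
    and "\<And>x. x \<in> D \<Longrightarrow> \<mu> * norm x \<le> norm (A x)"
  shows "minimum_attaining D A"
proof -
  have "min_modulus D A = \<mu>"
    unfolding min_modulus_def by (rule cInf_eq_minimum) (use assms in force)+
  then show ?thesis
    unfolding minimum_attaining_def using assms by auto
qed

lemma exists_min_attaining_near_if_min_modulus_zero:
  fixes A :: "'a::chilbert_space \<Rightarrow> 'b::chilbert_space"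
  assumes "densely_defined_closed D A" "\<exists>x\<in>D. norm x = 1" "min_modulus D A = 0" "0 < e"
  shows "\<exists>A'. densely_defined_closed D A' \<and> minimum_attaining D A' \<and> gap D A D A' < e"
proof -
  have op: "is_operator D A"
    using assms(1) by (simp add: densely_defined_closed_def)
  obtain x0 where x0: "x0 \<in> D" "norm x0 = 1" "norm (A x0) < e"
    using min_modulus_lessD[OF assms(2), of A e] assms(3,4) by auto
  define A' where "A' = (\<lambda>x. A x + scaleC (- cinner x0 x) (A x0))"
  have op': "is_operator D A'"
    unfolding A'_def using op
    by (rule is_operator_add_rank_one) (simp_all add: cinner_add_right cinner_scaleC_right)
  have bound: "norm (A' z - A z) \<le> norm (A x0) * norm (B z, z)" for B z
  proof -
    have "norm (A' z - A z) = cmod (cinner x0 z) * norm (A x0)"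
      by (simp add: A'_def norm_scaleC)
    also have "\<dots> \<le> norm z * norm (A x0)"
      using cmod_cinner_le[of x0 z] x0(2) by (simp add: mult_right_mono)
    also have "\<dots> \<le> norm (A x0) * norm (B z, z)"
      using mult_right_mono[OF norm_snd_le[of z "B z"] norm_ge_zero[of "A x0"]]
      by (simp add: mult.commute)
    finally show ?thesis .
  qed
  have "densely_defined_closed D A' \<and> gap D A D A' \<le> norm (A x0)"
    by (rule relatively_bounded_perturbation[OF assms(1) op']) (simp_all add: bound)
  moreover have "minimum_attaining D A'"
    using x0 by (intro minimum_attainingI[of x0 _ _ 0])
      (simp_all add: A'_def cinner_self_norm scaleC_minus1_left)
  ultimately show ?thesis
    using x0(3) by force
qed

section \<open>Operators with positive minimum modulus\<close>

lemma unit_vector_split: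
  assumes "csubspace D" "x0 \<in> D" "norm x0 = 1" "z \<in> D"
  obtains y where "y \<in> D" "cinner x0 y = 0" "z = scaleC (cinner x0 z) x0 + y"
    and "(norm z)\<^sup>2 = (cmod (cinner x0 z))\<^sup>2 + (norm y)\<^sup>2"
proof
  define y where "y = z - scaleC (cinner x0 z) x0"
  show "y \<in> D"
    using assms by (simp add: y_def csubspace_def csubspace_diff)
  show "cinner x0 y = 0"
    using assms(3) by (simp add: y_def cinner_diff_right cinner_scaleC_right cinner_self_norm)
  show "z = scaleC (cinner x0 z) x0 + y"
    by (simp add: y_def)
  then show "(norm z)\<^sup>2 = (cmod (cinner x0 z))\<^sup>2 + (norm y)\<^sup>2"
    using norm_add_sq_orthogonal[of "scaleC (cinner x0 z) x0" y] \<open>cinner x0 y = 0\<close> assms(3)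
    by (simp add: cinner_scaleC_left norm_scaleC)
qed

locale approximate_minimizer =
  fixes D :: "'a::chilbert_space set" and A :: "'a \<Rightarrow> 'b::chilbert_space" and m :: real
    and x0 :: 'a
  assumes operator: "is_operator D A"
    and m_pos: "0 < m"
    and bounded_below: "\<And>x. x \<in> D \<Longrightarrow> m * norm x \<le> norm (A x)"
    and x0_in: "x0 \<in> D" and x0_unit: "norm x0 = 1"
begin

lemma bounded_below_sq: "x \<in> D \<Longrightarrow> m\<^sup>2 * (norm x)\<^sup>2 \<le> (norm (A x))\<^sup>2"
  using power_mono[OF bounded_below[of x], of 2] m_pos by (simp add: power_mult_distrib)

lemma m_le_norm_Ax0: "m \<le> norm (A x0)"
  using bounded_below[OF x0_in] x0_unit by simp

lemma norm_Ax0_pos: "0 < norm (A x0)"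
  using m_le_norm_Ax0 m_pos by linarith

lemma excess_nonneg: "0 \<le> (norm (A x0))\<^sup>2 - m\<^sup>2"
  using m_le_norm_Ax0 m_pos by (simp add: power_mono)

(* The key estimate: A is bounded below by m along the complex lines x0 + t y. *)
lemma cross_term_le:
  assumes "y \<in> D" "cinner x0 y = 0"
  shows "(cmod (cinner (A x0) (A y)))\<^sup>2
           \<le> ((norm (A x0))\<^sup>2 - m\<^sup>2) * ((norm (A y))\<^sup>2 - m\<^sup>2 * (norm y)\<^sup>2)"
proof (rule cmod_sq_le_of_quadratic_nonneg)
  show "0 \<le> (norm (A x0))\<^sup>2 - m\<^sup>2"
    by (rule excess_nonneg)
  show "0 \<le> (norm (A y))\<^sup>2 - m\<^sup>2 * (norm y)\<^sup>2"
    using bounded_below_sq[OF assms(1)] by simp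
  fix t
  have "x0 + scaleC t y \<in> D"
    using operator x0_in assms(1) by (simp add: is_operator_def csubspace_def)
  moreover have "A (x0 + scaleC t y) = A x0 + scaleC t (A y)"
    using operator x0_in assms(1) by (simp add: is_operator_def csubspace_def)
  ultimately have "m\<^sup>2 * (norm (x0 + scaleC t y))\<^sup>2 \<le> (norm (A x0 + scaleC t (A y)))\<^sup>2"
    using bounded_below_sq by metis
  then show "0 \<le> ((norm (A x0))\<^sup>2 - m\<^sup>2) + 2 * Re (t * cinner (A x0) (A y))
      + (cmod t)\<^sup>2 * ((norm (A y))\<^sup>2 - m\<^sup>2 * (norm y)\<^sup>2)"
    using assms(2) x0_unit by (simp add: norm_add_scaleC_sq algebra_simps)
qed

definition residual :: "'a \<Rightarrow> 'b" where
  "residual y = A y - scaleC (cinner (A x0) (A y) / complex_of_real ((norm (A x0))\<^sup>2)) (A x0)"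

(* Replaces the component of A x along A x0 by m \<langle>x0, x\<rangle> A x0 / \<parallel>A x0\<parallel>, so that x0 is sent to a
   vector of norm m. *)
definition pinned :: "'a \<Rightarrow> 'b" where
  "pinned = (\<lambda>x. A x + scaleC (complex_of_real (m / norm (A x0)) * cinner x0 x
      - cinner (A x0) (A x) / complex_of_real ((norm (A x0))\<^sup>2)) (A x0))"

lemma residual_orthogonal: "cinner (A x0) (residual y) = 0"
  using norm_Ax0_pos
  by (simp add: residual_def cinner_diff_right cinner_scaleC_right cinner_self_norm)

lemma norm_residual_sq:
  "(norm (residual y))\<^sup>2 = (norm (A y))\<^sup>2 - (cmod (cinner (A x0) (A y)))\<^sup>2 / (norm (A x0))\<^sup>2"
proof -
  define c where "c = cinner (A x0) (A y) / complex_of_real ((norm (A x0))\<^sup>2)"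
  have "cinner (scaleC c (A x0)) (residual y) = 0"
    by (simp add: cinner_scaleC_left residual_orthogonal)
  then have "(norm (scaleC c (A x0) + residual y))\<^sup>2
      = (norm (scaleC c (A x0)))\<^sup>2 + (norm (residual y))\<^sup>2"
    by (rule norm_add_sq_orthogonal)
  moreover have "scaleC c (A x0) + residual y = A y"
    by (simp add: residual_def c_def)
  ultimately have "(norm (A y))\<^sup>2 = (cmod c * norm (A x0))\<^sup>2 + (norm (residual y))\<^sup>2"
    by (simp add: norm_scaleC)
  moreover have "cmod c = cmod (cinner (A x0) (A y)) / (norm (A x0))\<^sup>2"
    by (simp add: c_def norm_divide norm_power)
  then have "(cmod c * norm (A x0))\<^sup>2 = (cmod (cinner (A x0) (A y)))\<^sup>2 / (norm (A x0))\<^sup>2"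
    using norm_Ax0_pos by (simp add: field_simps power2_eq_square)
  ultimately show ?thesis
    by simp
qed

lemma norm_residual_ge:
  assumes "y \<in> D" "cinner x0 y = 0"
  shows "m * norm y \<le> norm (residual y)"
proof -
  have "(cmod (cinner (A x0) (A y)))\<^sup>2 \<le> (norm (A x0))\<^sup>2 * ((norm (A y))\<^sup>2 - m\<^sup>2 * (norm y)\<^sup>2)"
    using cross_term_le[OF assms] bounded_below_sq[OF assms(1)]
    by (smt (verit) mult_right_mono zero_le_power2)
  then have "(cmod (cinner (A x0) (A y)))\<^sup>2 / (norm (A x0))\<^sup>2 \<le> (norm (A y))\<^sup>2 - m\<^sup>2 * (norm y)\<^sup>2"
    using norm_Ax0_pos by (simp add: divide_le_eq mult.commute)
  then have "(m * norm y)\<^sup>2 \<le> (norm (residual y))\<^sup>2"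
    by (simp add: norm_residual_sq power_mult_distrib)
  then show ?thesis
    by (rule power2_le_imp_le) simp
qed

lemma norm_A_le_residual:
  assumes "y \<in> D" "cinner x0 y = 0"
  shows "m * norm (A y) \<le> norm (A x0) * norm (residual y)"
proof -
  have "(cmod (cinner (A x0) (A y)))\<^sup>2 \<le> ((norm (A x0))\<^sup>2 - m\<^sup>2) * (norm (A y))\<^sup>2"
    using cross_term_le[OF assms] excess_nonneg m_pos
    by (smt (verit) mult_left_mono zero_le_mult_iff zero_le_power2)
  then have "(m * norm (A y))\<^sup>2 \<le> (norm (A x0) * norm (residual y))\<^sup>2"
    using norm_Ax0_pos by (simp add: norm_residual_sq power_mult_distrib right_diff_distrib
        algebra_simps)
  then show ?thesis
    by (rule power2_le_imp_le) simp
qed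

lemma A_split:
  assumes "y \<in> D"
  shows "A (scaleC \<alpha> x0 + y) = scaleC \<alpha> (A x0) + A y"
  using operator x0_in assms by (simp add: is_operator_def csubspace_def)

lemma pinned_split:
  assumes "y \<in> D" "cinner x0 y = 0"
  shows "pinned (scaleC \<alpha> x0 + y)
           = scaleC (complex_of_real (m / norm (A x0)) * \<alpha>) (A x0) + residual y"
proof -
  have "cinner x0 (scaleC \<alpha> x0 + y) = \<alpha>"
    using assms(2) x0_unit by (simp add: cinner_add_right cinner_scaleC_right cinner_self_norm)
  moreover have "cinner (A x0) (A (scaleC \<alpha> x0 + y)) / complex_of_real ((norm (A x0))\<^sup>2)
      = \<alpha> + cinner (A x0) (A y) / complex_of_real ((norm (A x0))\<^sup>2)"
    using norm_Ax0_pos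
    by (simp add: A_split[OF assms(1)] cinner_add_right cinner_scaleC_right cinner_self_norm
        add_divide_distrib)
  ultimately have "pinned (scaleC \<alpha> x0 + y) = A (scaleC \<alpha> x0 + y)
      + scaleC (complex_of_real (m / norm (A x0)) * \<alpha>
        - (\<alpha> + cinner (A x0) (A y) / complex_of_real ((norm (A x0))\<^sup>2))) (A x0)"
    by (simp add: pinned_def)
  then show ?thesis
    unfolding A_split[OF assms(1)]
    by (simp add: residual_def scaleC_diff_left scaleC_add_left algebra_simps)
qed

lemma norm_pinned_split_sq:
  assumes "y \<in> D" "cinner x0 y = 0"
  shows "(norm (pinned (scaleC \<alpha> x0 + y)))\<^sup>2 = (m * cmod \<alpha>)\<^sup>2 + (norm (residual y))\<^sup>2"
proof -
  have "cinner (scaleC (complex_of_real (m / norm (A x0)) * \<alpha>) (A x0)) (residual y) = 0"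
    by (simp add: cinner_scaleC_left residual_orthogonal)
  then show ?thesis
    using norm_Ax0_pos m_pos
    by (simp add: pinned_split[OF assms] norm_add_sq_orthogonal norm_scaleC norm_mult norm_divide)
qed

lemma pinned_operator: "is_operator D pinned"
  unfolding pinned_def using operator
  by (rule is_operator_add_rank_one)
    (use operator in \<open>auto simp: is_operator_def cinner_add_right cinner_scaleC_right
      add_divide_distrib algebra_simps\<close>)

lemma norm_pinned_x0: "norm (pinned x0) = m"
proof -
  have "residual 0 = 0"
    using is_operator_zero[OF operator] by (simp add: residual_def)
  then have "(norm (pinned (scaleC 1 x0 + 0)))\<^sup>2 = m\<^sup>2"
    using norm_pinned_split_sq[of 0 1] operator
    by (simp add: is_operator_def csubspace_def power_mult_distrib)
  then show ?thesis
    using m_pos by (simp add: scaleC_one power2_eq_iff_nonneg)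
qed

lemma pinned_bounded_below:
  assumes "z \<in> D"
  shows "m * norm z \<le> norm (pinned z)"
proof -
  obtain y where y: "y \<in> D" "cinner x0 y = 0" "z = scaleC (cinner x0 z) x0 + y"
    and norm_z: "(norm z)\<^sup>2 = (cmod (cinner x0 z))\<^sup>2 + (norm y)\<^sup>2"
    using unit_vector_split[OF _ x0_in x0_unit assms] operator by (auto simp: is_operator_def)
  have "(m * norm z)\<^sup>2 = (m * cmod (cinner x0 z))\<^sup>2 + (m * norm y)\<^sup>2"
    by (simp add: power_mult_distrib norm_z algebra_simps)
  also have "\<dots> \<le> (norm (pinned z))\<^sup>2"
    using norm_pinned_split_sq[OF y(1,2), of "cinner x0 z"] y(3) m_pos
      power_mono[OF norm_residual_ge[OF y(1,2)], of 2]
    by simp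
  finally show ?thesis
    by (rule power2_le_imp_le) simp
qed

lemma norm_Ax0_diff_le: "norm (A x0) - m \<le> sqrt ((norm (A x0))\<^sup>2 - m\<^sup>2)"
  using m_le_norm_Ax0 m_pos by (intro real_le_rsqrt) (simp_all add: power2_eq_square algebra_simps)

lemma cmod_cross_term_le:
  assumes "y \<in> D" "cinner x0 y = 0"
  shows "cmod (cinner (A x0) (A y)) \<le> sqrt ((norm (A x0))\<^sup>2 - m\<^sup>2) * norm (A y)"
proof -
  have "(cmod (cinner (A x0) (A y)))\<^sup>2 \<le> ((norm (A x0))\<^sup>2 - m\<^sup>2) * (norm (A y))\<^sup>2"
    using cross_term_le[OF assms] excess_nonneg m_pos
    by (smt (verit, best) mult_left_mono zero_le_mult_iff zero_le_power2)
  then have "cmod (cinner (A x0) (A y)) \<le> sqrt (((norm (A x0))\<^sup>2 - m\<^sup>2) * (norm (A y))\<^sup>2)"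
    by (rule real_le_rsqrt)
  then show ?thesis
    by (simp add: real_sqrt_mult)
qed

lemma norm_pinned_diff_le:
  assumes "y \<in> D" "cinner x0 y = 0"
  shows "norm (pinned (scaleC \<alpha> x0 + y) - A (scaleC \<alpha> x0 + y))
           \<le> sqrt ((norm (A x0))\<^sup>2 - m\<^sup>2) * (cmod \<alpha> + norm (A y) / norm (A x0))"
proof -
  define \<nu> where "\<nu> = norm (A x0)"
  define b where "b = cinner (A x0) (A y)"
  have \<nu>: "m \<le> \<nu>" "0 < \<nu>"
    using m_le_norm_Ax0 norm_Ax0_pos by (simp_all add: \<nu>_def)
  have "pinned (scaleC \<alpha> x0 + y) - A (scaleC \<alpha> x0 + y)
      = scaleC (complex_of_real (m / \<nu> - 1) * \<alpha>) (A x0) - scaleC (b / complex_of_real (\<nu>\<^sup>2)) (A x0)"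
    unfolding pinned_split[OF assms] A_split[OF assms(1)]
    by (simp add: residual_def \<nu>_def b_def scaleC_diff_left algebra_simps)
  moreover have "norm (scaleC (complex_of_real (m / \<nu> - 1) * \<alpha>) (A x0)) = (\<nu> - m) * cmod \<alpha>"
  proof -
    have "m / \<nu> - 1 \<le> 0"
      using \<nu> by simp
    then have "cmod (complex_of_real (m / \<nu> - 1) * \<alpha>) = (1 - m / \<nu>) * cmod \<alpha>"
      by (simp only: norm_mult norm_of_real abs_of_nonpos) simp
    then show ?thesis
      using \<nu> by (simp add: norm_scaleC \<nu>_def[symmetric] field_simps)
  qed
  moreover have "norm (scaleC (b / complex_of_real (\<nu>\<^sup>2)) (A x0)) = cmod b / \<nu>"
    using \<nu> by (simp add: norm_scaleC norm_divide norm_mult \<nu>_def[symmetric] power2_eq_square)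
  ultimately have "norm (pinned (scaleC \<alpha> x0 + y) - A (scaleC \<alpha> x0 + y))
      \<le> sqrt (\<nu>\<^sup>2 - m\<^sup>2) * cmod \<alpha> + sqrt (\<nu>\<^sup>2 - m\<^sup>2) * norm (A y) / \<nu>"
    using norm_triangle_ineq4 \<nu>(2) norm_Ax0_diff_le cmod_cross_term_le[OF assms]
    unfolding \<nu>_def[symmetric] b_def[symmetric]
    by (smt (verit) divide_right_mono mult_right_mono norm_ge_zero)
  then show ?thesis
    by (simp add: \<nu>_def distrib_left)
qed

lemma pinned_component_estimates:
  assumes "z \<in> D"
  obtains y where "y \<in> D" "cinner x0 y = 0"
    and "norm (pinned z - A z)
           \<le> sqrt ((norm (A x0))\<^sup>2 - m\<^sup>2) * (norm z + norm (A y) / norm (A x0))"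
    and "norm (A y) \<le> norm (A z) + norm z * norm (A x0)"
    and "norm (residual y) \<le> norm (pinned z)"
proof -
  define \<alpha> where "\<alpha> = cinner x0 z"
  obtain y where y: "y \<in> D" "cinner x0 y = 0" and z: "z = scaleC \<alpha> x0 + y"
    and norm_z: "(norm z)\<^sup>2 = (cmod \<alpha>)\<^sup>2 + (norm y)\<^sup>2"
    using unit_vector_split[OF _ x0_in x0_unit assms] operator
    by (auto simp: is_operator_def \<alpha>_def)
  have "(cmod \<alpha>)\<^sup>2 \<le> (norm z)\<^sup>2"
    using norm_z by simp
  then have \<alpha>: "cmod \<alpha> \<le> norm z"
    by (rule power2_le_imp_le) simp
  have "(norm (residual y))\<^sup>2 \<le> (norm (pinned z))\<^sup>2"
    using norm_pinned_split_sq[OF y, of \<alpha>] z by simp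
  then have residual: "norm (residual y) \<le> norm (pinned z)"
    by (rule power2_le_imp_le) simp
  have "norm (pinned z - A z)
      \<le> sqrt ((norm (A x0))\<^sup>2 - m\<^sup>2) * (cmod \<alpha> + norm (A y) / norm (A x0))"
    unfolding z by (rule norm_pinned_diff_le[OF y])
  also have "\<dots> \<le> sqrt ((norm (A x0))\<^sup>2 - m\<^sup>2) * (norm z + norm (A y) / norm (A x0))"
    using \<alpha> excess_nonneg by (intro mult_left_mono) simp_all
  finally have "norm (pinned z - A z)
      \<le> sqrt ((norm (A x0))\<^sup>2 - m\<^sup>2) * (norm z + norm (A y) / norm (A x0))" .
  moreover have "norm (A y) \<le> norm (A z) + norm z * norm (A x0)"
    using norm_triangle_ineq4[of "A z" "scaleC \<alpha> (A x0)"] mult_right_mono[OF \<alpha>, of "norm (A x0)"]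
    by (simp add: z A_split[OF y(1)] norm_scaleC)
  ultimately show thesis
    using residual by (rule that[OF y])
qed

lemma pinned_relative_bound:
  assumes "z \<in> D"
  shows "norm (pinned z - A z) \<le> sqrt ((norm (A x0))\<^sup>2 - m\<^sup>2) * (2 + 1 / m) * norm (A z, z)"
proof -
  obtain y where "norm (pinned z - A z)
      \<le> sqrt ((norm (A x0))\<^sup>2 - m\<^sup>2) * (norm z + norm (A y) / norm (A x0))"
    and Ay: "norm (A y) \<le> norm (A z) + norm z * norm (A x0)"
    using pinned_component_estimates[OF assms] by blast
  moreover have "norm (A y) / norm (A x0) \<le> 1 / m * norm (A z) + norm z"
  proof -
    have "norm (A y) / norm (A x0) \<le> norm (A z) / norm (A x0) + norm z"
      using Ay norm_Ax0_pos by (simp add: field_simps)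
    also have "norm (A z) / norm (A x0) \<le> norm (A z) / m"
      using m_pos m_le_norm_Ax0 norm_Ax0_pos by (intro divide_left_mono) simp_all
    finally show ?thesis
      by simp
  qed
  ultimately have "norm (pinned z - A z)
      \<le> sqrt ((norm (A x0))\<^sup>2 - m\<^sup>2) * (2 * norm z + 1 / m * norm (A z))"
    using excess_nonneg by (smt (verit) mult_left_mono real_sqrt_ge_zero)
  also have "\<dots> \<le> sqrt ((norm (A x0))\<^sup>2 - m\<^sup>2) * ((2 + 1 / m) * norm (A z, z))"
    using m_pos m_le_norm_Ax0 by (intro mult_left_mono norm_Pair_combination_le) simp_all
  finally show ?thesis
    by (simp only: mult.assoc)
qed

lemma pinned_relative_bound':
  assumes "z \<in> D"
  shows "norm (pinned z - A z) \<le> sqrt ((norm (A x0))\<^sup>2 - m\<^sup>2) * (2 + 1 / m) * norm (pinned z, z)"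
proof -
  obtain y where y: "y \<in> D" "cinner x0 y = 0"
    and "norm (pinned z - A z)
      \<le> sqrt ((norm (A x0))\<^sup>2 - m\<^sup>2) * (norm z + norm (A y) / norm (A x0))"
    and residual: "norm (residual y) \<le> norm (pinned z)"
    using pinned_component_estimates[OF assms] by blast
  moreover have "norm (A y) / norm (A x0) \<le> 1 / m * norm (pinned z)"
  proof -
    have "m * norm (A y) \<le> norm (A x0) * norm (pinned z)"
      using norm_A_le_residual[OF y] mult_left_mono[OF residual, of "norm (A x0)"] by simp
    then have "(m * norm (A y)) / (m * norm (A x0))
        \<le> (norm (A x0) * norm (pinned z)) / (m * norm (A x0))"
      using m_pos norm_Ax0_pos by (intro divide_right_mono) simp_all
    then show ?thesis
      using m_pos norm_Ax0_pos by simp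
  qed
  ultimately have "norm (pinned z - A z)
      \<le> sqrt ((norm (A x0))\<^sup>2 - m\<^sup>2) * (2 * norm z + 1 / m * norm (pinned z))"
    using excess_nonneg by (smt (verit) mult_left_mono real_sqrt_ge_zero norm_ge_zero)
  also have "\<dots> \<le> sqrt ((norm (A x0))\<^sup>2 - m\<^sup>2) * ((2 + 1 / m) * norm (pinned z, z))"
    using m_pos m_le_norm_Ax0 by (intro mult_left_mono norm_Pair_combination_le) simp_all
  finally show ?thesis
    by (simp only: mult.assoc)
qed

lemma pinned_approximates:
  assumes "densely_defined_closed D A"
  shows "densely_defined_closed D pinned \<and> minimum_attaining D pinned
    \<and> gap D A D pinned \<le> sqrt ((norm (A x0))\<^sup>2 - m\<^sup>2) * (2 + 1 / m)"
proof -
  have "0 \<le> sqrt ((norm (A x0))\<^sup>2 - m\<^sup>2) * (2 + 1 / m)"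
    using excess_nonneg m_pos by simp
  then show ?thesis
    using relatively_bounded_perturbation[OF assms pinned_operator _ pinned_relative_bound
        pinned_relative_bound']
      minimum_attainingI[OF x0_in x0_unit norm_pinned_x0 pinned_bounded_below]
    by blast
qed

end

lemma exists_min_attaining_near_if_min_modulus_pos:
  fixes A :: "'a::chilbert_space \<Rightarrow> 'b::chilbert_space"
  assumes "densely_defined_closed D A" "\<exists>x\<in>D. norm x = 1" "0 < min_modulus D A" "0 < e"
  shows "\<exists>A'. densely_defined_closed D A' \<and> minimum_attaining D A' \<and> gap D A D A' < e"
proof -
  define m where "m = min_modulus D A"
  define \<delta> where "\<delta> = e / (2 + 1 / m)"
  have "0 < m"
    using assms(3) by (simp add: m_def)
  then have "0 < \<delta>"
    using assms(4) unfolding \<delta>_def by (intro divide_pos_pos) (simp_all add: add_pos_pos)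
  then have "m < sqrt (m\<^sup>2 + \<delta>\<^sup>2)"
    by (simp add: real_less_rsqrt)
  then obtain x0 where x0: "x0 \<in> D" "norm x0 = 1" "norm (A x0) < sqrt (m\<^sup>2 + \<delta>\<^sup>2)"
    using min_modulus_lessD[OF assms(2)] m_def by blast
  have op: "is_operator D A"
    using assms(1) by (simp add: densely_defined_closed_def)
  interpret approximate_minimizer D A m x0
    using op \<open>0 < m\<close> x0 min_modulus_le[OF op] by unfold_locales (simp_all add: m_def)
  have "(norm (A x0))\<^sup>2 < m\<^sup>2 + \<delta>\<^sup>2"
    using x0(3) by (metis norm_ge_zero real_sqrt_abs real_sqrt_less_iff abs_of_nonneg)
  then have "sqrt ((norm (A x0))\<^sup>2 - m\<^sup>2) < \<delta>"
    using excess_nonneg \<open>0 < \<delta>\<close> by (intro real_less_lsqrt) simp_all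
  moreover have "0 < 2 + 1 / m"
    using \<open>0 < m\<close> by (simp add: add_pos_pos)
  ultimately have "sqrt ((norm (A x0))\<^sup>2 - m\<^sup>2) * (2 + 1 / m) < e"
    by (simp add: \<delta>_def less_divide_eq)
  then show ?thesis
    using pinned_approximates[OF assms(1)] by force
qed

theorem corollary3p6:
  assumes "infinite_dimensional TYPE('a::chilbert_space)"
      and "infinite_dimensional TYPE('b::chilbert_space)"
  shows "\<forall>(D::'a set) (A::'a \<Rightarrow> 'b). densely_defined_closed D A \<longrightarrow>
           (\<forall>e>0. \<exists>D' A'. densely_defined_closed D' A' \<and> minimum_attaining D' A' \<and>
                          gap D A D' A' < e)"
proof (intro allI impI)
  fix D :: "'a set" and A :: "'a \<Rightarrow> 'b" and e :: real
  assume A: "densely_defined_closed D A" and "0 < e"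
  then have "\<exists>x\<in>D. norm x = 1"
    using exists_unit_vector_if_dense[OF assms(1)]
    by (simp add: densely_defined_closed_def is_operator_def)
  then have "0 \<le> min_modulus D A"
    by (rule min_modulus_nonneg)
  then consider "min_modulus D A = 0" | "0 < min_modulus D A"
    by (auto simp: le_less)
  then have "\<exists>A'. densely_defined_closed D A' \<and> minimum_attaining D A' \<and> gap D A D A' < e"
  proof cases
    case 1
    then show ?thesis
      by (rule exists_min_attaining_near_if_min_modulus_zero[OF A \<open>\<exists>x\<in>D. norm x = 1\<close> _ \<open>0 < e\<close>])
  next
    case 2
    then show ?thesis
      by (rule exists_min_attaining_near_if_min_modulus_pos[OF A \<open>\<exists>x\<in>D. norm x = 1\<close> _ \<open>0 < e\<close>])
  qed
  then show "\<exists>D' A'. densely_defined_closed D' A' \<and> minimum_attaining D' A' \<and> gap D A D' A' < e"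
    by blast
qed

end
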